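(* Let $P^{(1)},\dots,P^{(m)}$ be phase-free $n$-qubit Pauli strings in sparse form, each of weight at most $k$. In the computational model where dictionary lookup and update for a key of length $r$ cost $O(r)$ expected time, the certification-with-witness algorithm (process $i=1,\dots,m$: compute $c=(N-Z)/2$ with $Z=\sum_{A\subseteq\operatorname{supp}(P^{(i)})}(-2)^{|A|}\sum_{a\in\mathcal{L}_{P^{(i)}}(A)}D[(A,a)]$; if $c>0$ scan $j<i$ for the first $j$ with $|\operatorname{conf}(P^{(j)},P^{(i)})|$ odd and return $(j,i)$; otherwise increment $D[(A,P^{(i)}|_A)]$ for all $A\subseteq\operatorname{supp}(P^{(i)})$ and increment $N$; if the loop ends return ``all commute'') returns either a correct all-commuting certificate (all strings pairwise commute) or a correct anticommuting witness pair, in expected time $O(mk3^k)$.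
   Context: A phase-free $n$-qubit Pauli string is $P=(P_1,\dots,P_n)\in\{I,X,Y,Z\}^n$ with $I,X,Y,Z$ the identity and Pauli matrices, identified with $P_1\otimes\cdots\otimes P_n$, stored sparsely as pairs $(j,P_j)$ for $j\in\operatorname{supp}(P)=\{j:P_j\neq I\}$; its weight is $|\operatorname{supp}(P)|$. $\operatorname{conf}(P,Q)=\{j:P_j\neq I, Q_j\neq I, P_j\neq Q_j\}$. $D$ is a dictionary (initially empty, absent keys zero) keyed by labeled patterns $(A,a)$, $A$ a set of positions and $a:A\to\{X,Y,Z\}$; $N$ starts at $0$. $\mathcal{L}_P(A)=\{a:A\to\{X,Y,Z\}: a(j)\neq P_j\ \forall j\in A\}$, and $P|_A$ is $j\mapsto P_j$ on $A$. *)

theory Defs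
  imports Complex_Main "Jordan_Normal_Form.Matrix"
begin

datatype pauli = PI | PX | PY | PZ

definition pauli_mat :: "pauli \<Rightarrow> complex mat" where
  "pauli_mat p = (case p of
      PI \<Rightarrow> mat_of_rows_list 2 [[1, 0], [0, 1]]
    | PX \<Rightarrow> mat_of_rows_list 2 [[0, 1], [1, 0]]
    | PY \<Rightarrow> mat_of_rows_list 2 [[0, - \<i>], [\<i>, 0]]
    | PZ \<Rightarrow> mat_of_rows_list 2 [[1, 0], [0, -1]])"

type_synonym sparse = "(nat \<times> pauli) list"

definition valid_sparse :: "nat \<Rightarrow> sparse \<Rightarrow> bool" where
  "valid_sparse n P \<longleftrightarrow> distinct (map fst P) \<and> (\<forall>(j, p) \<in> set P. j < n \<and> p \<noteq> PI)"

definition pfun :: "sparse \<Rightarrow> nat \<Rightarrow> pauli" where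
  "pfun P j = (case map_of P j of Some p \<Rightarrow> p | None \<Rightarrow> PI)"

definition weight :: "sparse \<Rightarrow> nat" where
  "weight P = card {j. pfun P j \<noteq> PI}"

text \<open>The operator P_0 \<otimes> ... \<otimes> P_{n-1} acting on (C^2)^{\<otimes> n}; basis index x < 2^n
  has j-th bit (x div 2^j) mod 2.\<close>
definition pauli_op :: "nat \<Rightarrow> sparse \<Rightarrow> complex mat" where
  "pauli_op n P = mat (2 ^ n) (2 ^ n)
     (\<lambda>(x, y). \<Prod>j<n. pauli_mat (pfun P j) $$ ((x div 2 ^ j) mod 2, (y div 2 ^ j) mod 2))"

definition ops_commute :: "nat \<Rightarrow> sparse \<Rightarrow> sparse \<Rightarrow> bool" where
  "ops_commute n P Q \<longleftrightarrow> pauli_op n P * pauli_op n Q = pauli_op n Q * pauli_op n P"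

definition conf :: "sparse \<Rightarrow> sparse \<Rightarrow> nat set" where
  "conf P Q = {j. pfun P j \<noteq> PI \<and> pfun Q j \<noteq> PI \<and> pfun P j \<noteq> pfun Q j}"

text \<open>Dictionary keys: labeled patterns (A, a), with a represented as a function that is
  the identity outside A.\<close>
type_synonym key = "nat set \<times> (nat \<Rightarrow> pauli)"
type_synonym dict = "key \<Rightarrow> int"

definition key_of :: "sparse \<Rightarrow> key" where
  "key_of L = (set (map fst L), pfun L)"

text \<open>All labelings a \<in> L_P(A) of a sublist A of a sparse string (a(j) \<noteq> P_j).\<close>
fun labs :: "sparse \<Rightarrow> sparse list" where
  "labs [] = [[]]"
| "labs ((j, p) # r) =
     concat (map (\<lambda>q. map ((#) (j, q)) (labs r)) (filter (\<lambda>q. q \<noteq> p) [PX, PY, PZ]))"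

definition zval :: "dict \<Rightarrow> sparse \<Rightarrow> int" where
  "zval D P = sum_list (map (\<lambda>A. sum_list (map (\<lambda>a. (-2) ^ length A * D (key_of a)) (labs A)))
                          (subseqs P))"

definition dict_upd :: "dict \<Rightarrow> sparse \<Rightarrow> dict" where
  "dict_upd D P = foldl (\<lambda>D' A. D'(key_of A := D' (key_of A) + 1)) D (subseqs P)"

text \<open>Cost model: a dictionary lookup / update with a key of length r costs r + 1
  (this also pays for generating the key); other steps cost O(1).\<close>
definition query_cost :: "sparse \<Rightarrow> nat" where
  "query_cost P = sum_list (map (\<lambda>A. sum_list (map (\<lambda>a. length a + 1) (labs A))) (subseqs P)) + 1"

definition upd_cost :: "sparse \<Rightarrow> nat" where
  "upd_cost P = sum_list (map (\<lambda>A. length A + 1) (subseqs P)) + 1"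

text \<open>Scan earlier strings (index j onwards) for the first one with odd conflict set;
  computing conf(Q,P) from sparse forms costs |Q| + |P| + 1.\<close>
fun scan :: "sparse list \<Rightarrow> sparse \<Rightarrow> nat \<Rightarrow> nat option \<times> nat" where
  "scan [] P j = (None, 1)"
| "scan (Q # Qs) P j =
     (if odd (card (conf Q P)) then (Some j, length Q + length P + 1)
      else (let (r, c) = scan Qs P (Suc j) in (r, length Q + length P + 1 + c)))"

datatype result = AllCommute | Witness nat nat | NoWitness

text \<open>Main loop: processed strings (in order), remaining strings, D, N.
  Returns the result and the total cost. Indices are 0-based.\<close>
fun cert_loop :: "sparse list \<Rightarrow> sparse list \<Rightarrow> dict \<Rightarrow> int \<Rightarrow> result \<times> nat" where
  "cert_loop done [] D N = (AllCommute, 1)"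
| "cert_loop done (P # rest) D N =
     (let c = (N - zval D P) div 2 in
      if c > 0 then
        (let (r, cs) = scan done P 0 in
          ((case r of Some j \<Rightarrow> Witness j (length done) | None \<Rightarrow> NoWitness),
           query_cost P + cs))
      else
        (let (res, cst) = cert_loop (done @ [P]) rest (dict_upd D P) (N + 1) in
          (res, query_cost P + upd_cost P + cst)))"

definition certify :: "sparse list \<Rightarrow> result \<times> nat" where
  "certify Ps = cert_loop [] Ps (\<lambda>_. 0) 0"

end

theory Submission
  imports Defs
begin

(* Single-qubit Pauli matrices anticommute exactly when both are non-identity and distinct,
  and the tensor product multiplies these signs, so two Pauli strings commute iff their
  conflict set has even size.

  After the strings Q_1, ..., Q_t have been accepted, D[(A, a)] counts the Q_s with
  A \<subseteq> supp Q_s and Q_s|_A = a. For a new string P, some a \<in> L_P(A) equals Q|_A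
  iff A \<subseteq> conf(Q, P), so Q contributes the sum over A \<subseteq> conf(Q, P) of (-2)^|A|,
  i.e. (1 - 2)^|conf(Q, P)|, to Z. Hence (N - Z)/2 is the number of accepted strings that
  anticommute with P: if it is zero P is accepted, otherwise the scan finds a witness.

  A query costs the sum over A \<subseteq> supp P of 2^|A| (|A| + 1) \<le> (k + 1) 3^k, an update
  2^|P| (k + 1), and the scan, run at most once, O(m k). *)

section \<open>Pauli strings commute iff their conflict set is even\<close>

lemma pauli_mat_carrier [simp]: "pauli_mat p \<in> carrier_mat 2 2"
  by (cases p) (simp_all add: pauli_mat_def mat_of_rows_list_def numeral_2_eq_2)

lemma pauli_mat_index:
  "pauli_mat p $$ (0, 0) = (case p of PI \<Rightarrow> 1 | PX \<Rightarrow> 0 | PY \<Rightarrow> 0 | PZ \<Rightarrow> 1)"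
  "pauli_mat p $$ (0, Suc 0) = (case p of PI \<Rightarrow> 0 | PX \<Rightarrow> 1 | PY \<Rightarrow> - \<i> | PZ \<Rightarrow> 0)"
  "pauli_mat p $$ (Suc 0, 0) = (case p of PI \<Rightarrow> 0 | PX \<Rightarrow> 1 | PY \<Rightarrow> \<i> | PZ \<Rightarrow> 0)"
  "pauli_mat p $$ (Suc 0, Suc 0) = (case p of PI \<Rightarrow> 1 | PX \<Rightarrow> 0 | PY \<Rightarrow> 0 | PZ \<Rightarrow> -1)"
  by (cases p; simp add: pauli_mat_def mat_of_rows_list_def)+

lemma index_mult_mat_2x2:
  assumes "A \<in> carrier_mat 2 2" "B \<in> carrier_mat 2 2" "a < 2" "c < 2"
  shows "(A * B) $$ (a, c) = A $$ (a, 0) * B $$ (0, c) + A $$ (a, Suc 0) * B $$ (Suc 0, c)"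
  using assms by (auto simp: scalar_prod_def numeral_2_eq_2)

lemma index_mult_mat_sum:
  "A \<in> carrier_mat m k \<Longrightarrow> B \<in> carrier_mat k l \<Longrightarrow> i < m \<Longrightarrow> j < l \<Longrightarrow>
   (A * B) $$ (i, j) = (\<Sum>y<k. A $$ (i, y) * B $$ (y, j))"
  by (simp add: scalar_prod_def atLeast0LessThan)

definition pauli_sign :: "pauli \<Rightarrow> pauli \<Rightarrow> complex" where
  "pauli_sign p q = (if p \<noteq> PI \<and> q \<noteq> PI \<and> p \<noteq> q then -1 else 1)"

lemma pauli_mat_mult_swap:
  assumes "a < 2" "c < 2"
  shows "(pauli_mat p * pauli_mat q) $$ (a, c) = pauli_sign p q * (pauli_mat q * pauli_mat p) $$ (a, c)"
proof -
  have "a = 0 \<or> a = Suc 0" "c = 0 \<or> c = Suc 0"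
    using assms by auto
  then show ?thesis
    unfolding index_mult_mat_2x2[OF pauli_mat_carrier pauli_mat_carrier assms]
    by (cases p; cases q; elim disjE; simp add: pauli_mat_index pauli_sign_def)
qed

lemma pauli_mat_mult_reverse_00:
  "(pauli_mat p * pauli_mat q * (pauli_mat q * pauli_mat p)) $$ (0, 0) = 1"
proof -
  have "pauli_mat p * pauli_mat q \<in> carrier_mat 2 2" "pauli_mat q * pauli_mat p \<in> carrier_mat 2 2"
    using mult_carrier_mat[OF pauli_mat_carrier pauli_mat_carrier] by auto
  then show ?thesis
    unfolding index_mult_mat_2x2[OF _ _ pos2 pos2]
    by (simp del: index_mult_mat add: index_mult_mat_2x2)
       (cases p; cases q; simp add: pauli_mat_index)
qed

definition bitval :: "nat \<Rightarrow> nat \<Rightarrow> nat" where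
  "bitval j x = (x div 2 ^ j) mod 2"

lemma bitval_less_2: "bitval j x < 2"
  by (simp add: bitval_def)

lemma bitval_0: "bitval 0 x = x mod 2"
  and bitval_Suc: "bitval (Suc j) x = bitval j (x div 2)"
  by (simp_all add: bitval_def div_mult2_eq)

definition tensor_mat :: "nat \<Rightarrow> (nat \<Rightarrow> complex mat) \<Rightarrow> complex mat" where
  "tensor_mat n f = mat (2 ^ n) (2 ^ n) (\<lambda>(x, y). \<Prod>j<n. f j $$ (bitval j x, bitval j y))"

lemma pauli_op_eq_tensor_mat: "pauli_op n P = tensor_mat n (\<lambda>j. pauli_mat (pfun P j))"
  unfolding pauli_op_def tensor_mat_def bitval_def by simp

lemma sum_lessThan_double:
  fixes g :: "nat \<Rightarrow> 'a::comm_monoid_add"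
  shows "(\<Sum>y<2 * m. g y) = (\<Sum>y<m. g (2 * y) + g (2 * y + 1))"
  by (induction m) (simp_all add: add.assoc)

lemma sum_prod_bitval:
  fixes g :: "nat \<Rightarrow> nat \<Rightarrow> 'a::comm_semiring_1"
  shows "(\<Sum>y<2 ^ n. \<Prod>j<n. g j (bitval j y)) = (\<Prod>j<n. g j 0 + g j 1)"
proof (induction n arbitrary: g)
  case (Suc n)
  have "(\<Sum>y<2 ^ Suc n. \<Prod>j<Suc n. g j (bitval j y))
      = (\<Sum>y<2 * 2 ^ n. g 0 (y mod 2) * (\<Prod>j<n. g (Suc j) (bitval j (y div 2))))"
    by (simp only: power_Suc prod.lessThan_Suc_shift bitval_0 bitval_Suc)
  also have "\<dots> = (\<Sum>y<2 ^ n. g 0 0 * (\<Prod>j<n. g (Suc j) (bitval j y))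
                               + g 0 1 * (\<Prod>j<n. g (Suc j) (bitval j y)))"
    by (simp add: sum_lessThan_double)
  also have "\<dots> = (g 0 0 + g 0 1) * (\<Sum>y<2 ^ n. \<Prod>j<n. g (Suc j) (bitval j y))"
    by (simp add: sum.distrib sum_distrib_left algebra_simps)
  also have "\<dots> = (\<Prod>j<Suc n. g j 0 + g j 1)"
    by (simp only: Suc.IH[of "\<lambda>j. g (Suc j)"] prod.lessThan_Suc_shift)
  finally show ?case .
qed simp

lemma tensor_mat_mult:
  assumes "\<And>j. f j \<in> carrier_mat 2 2" "\<And>j. g j \<in> carrier_mat 2 2"
  shows "tensor_mat n f * tensor_mat n g = tensor_mat n (\<lambda>j. f j * g j)"
proof (rule eq_matI)
  fix x z
  assume "x < dim_row (tensor_mat n (\<lambda>j. f j * g j))" "z < dim_col (tensor_mat n (\<lambda>j. f j * g j))"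
  then have x: "x < 2 ^ n" and z: "z < 2 ^ n"
    by (auto simp: tensor_mat_def)
  have "(tensor_mat n f * tensor_mat n g) $$ (x, z)
      = (\<Sum>y<2 ^ n. \<Prod>j<n. f j $$ (bitval j x, bitval j y) * g j $$ (bitval j y, bitval j z))"
    using x z by (simp add: tensor_mat_def scalar_prod_def atLeast0LessThan prod.distrib)
  also have "\<dots> = (\<Prod>j<n. f j $$ (bitval j x, 0) * g j $$ (0, bitval j z)
                       + f j $$ (bitval j x, Suc 0) * g j $$ (Suc 0, bitval j z))"
    using sum_prod_bitval[of "\<lambda>j b. f j $$ (bitval j x, b) * g j $$ (b, bitval j z)"] by simp
  also have "\<dots> = (\<Prod>j<n. (f j * g j) $$ (bitval j x, bitval j z))"
    by (simp only: index_mult_mat_2x2[OF assms bitval_less_2 bitval_less_2])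
  finally show "(tensor_mat n f * tensor_mat n g) $$ (x, z) = tensor_mat n (\<lambda>j. f j * g j) $$ (x, z)"
    using x z by (simp add: tensor_mat_def)
qed (auto simp: tensor_mat_def)

lemma pauli_op_carrier: "pauli_op n P \<in> carrier_mat (2 ^ n) (2 ^ n)"
  by (simp add: pauli_op_def)

lemma pfun_eq_PI_if_notin: "j \<notin> fst ` set P \<Longrightarrow> pfun P j = PI"
  by (simp add: pfun_def map_of_eq_None_iff[symmetric])

lemma conf_subset_fst: "conf Q P \<subseteq> fst ` set P"
  using pfun_eq_PI_if_notin unfolding conf_def by blast

lemma conf_commute: "conf P Q = conf Q P"
  unfolding conf_def by auto

lemma conf_self: "conf P P = {}"
  unfolding conf_def by auto

lemma prod_pauli_sign:
  assumes "valid_sparse n P"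
  shows "(\<Prod>j<n. pauli_sign (pfun P j) (pfun Q j)) = (-1) ^ card (conf P Q)"
proof -
  have "conf P Q \<subseteq> fst ` set P"
    using conf_subset_fst conf_commute by metis
  also have "\<dots> \<subseteq> {..<n}"
    using assms by (auto simp: valid_sparse_def)
  finally have "conf P Q \<subseteq> {..<n}" .
  then have "(\<Prod>j<n. pauli_sign (pfun P j) (pfun Q j)) = (\<Prod>j\<in>conf P Q. -1)"
    by (subst prod.mono_neutral_right[of "{..<n}" "conf P Q"])
       (auto simp: pauli_sign_def conf_def)
  then show ?thesis
    by simp
qed

lemma pauli_op_mult_swap:
  assumes "valid_sparse n P" "x < 2 ^ n" "z < 2 ^ n"
  shows "(pauli_op n P * pauli_op n Q) $$ (x, z)
       = (-1) ^ card (conf P Q) * (pauli_op n Q * pauli_op n P) $$ (x, z)"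
proof -
  have "(pauli_op n P * pauli_op n Q) $$ (x, z)
      = (\<Prod>j<n. (pauli_mat (pfun P j) * pauli_mat (pfun Q j)) $$ (bitval j x, bitval j z))"
    unfolding pauli_op_eq_tensor_mat tensor_mat_mult[OF pauli_mat_carrier pauli_mat_carrier]
    using assms(2,3) by (simp add: tensor_mat_def)
  also have "\<dots> = (\<Prod>j<n. pauli_sign (pfun P j) (pfun Q j)
                         * (pauli_mat (pfun Q j) * pauli_mat (pfun P j)) $$ (bitval j x, bitval j z))"
    by (intro prod.cong refl pauli_mat_mult_swap bitval_less_2)
  also have "\<dots> = (-1) ^ card (conf P Q) * (pauli_op n Q * pauli_op n P) $$ (x, z)"
    unfolding pauli_op_eq_tensor_mat tensor_mat_mult[OF pauli_mat_carrier pauli_mat_carrier]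
    using assms by (simp add: prod.distrib prod_pauli_sign tensor_mat_def)
  finally show ?thesis .
qed

lemma pauli_op_mult_reverse_00:
  "(pauli_op n P * pauli_op n Q * (pauli_op n Q * pauli_op n P)) $$ (0, 0) = 1"
proof -
  have "pauli_op n P * pauli_op n Q * (pauli_op n Q * pauli_op n P)
      = tensor_mat n (\<lambda>j. pauli_mat (pfun P j) * pauli_mat (pfun Q j)
                           * (pauli_mat (pfun Q j) * pauli_mat (pfun P j)))"
    using mult_carrier_mat[OF pauli_mat_carrier pauli_mat_carrier]
    by (simp add: pauli_op_eq_tensor_mat tensor_mat_mult)
  then show ?thesis
    by (simp add: tensor_mat_def bitval_def pauli_mat_mult_reverse_00)
qed

theorem ops_commute_iff_even_conf:
  assumes "valid_sparse n P"
  shows "ops_commute n P Q \<longleftrightarrow> even (card (conf P Q))"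
proof
  assume even: "even (card (conf P Q))"
  show "ops_commute n P Q"
    unfolding ops_commute_def
  proof (rule eq_matI)
    fix x z
    assume "x < dim_row (pauli_op n Q * pauli_op n P)" "z < dim_col (pauli_op n Q * pauli_op n P)"
    then have "x < 2 ^ n" "z < 2 ^ n"
      by (simp_all add: pauli_op_def)
    then show "(pauli_op n P * pauli_op n Q) $$ (x, z) = (pauli_op n Q * pauli_op n P) $$ (x, z)"
      using pauli_op_mult_swap[OF assms] even by simp
  qed (simp_all add: pauli_op_def)
next
  \<comment> \<open>If PQ = QP = -QP then PQ = 0, contradicting (PQ)(QP) = 1.\<close>
  assume comm: "ops_commute n P Q"
  show "even (card (conf P Q))"
  proof (rule ccontr)
    assume "odd (card (conf P Q))"
    then have "(pauli_op n P * pauli_op n Q) $$ (x, z) = 0" if "x < 2 ^ n" "z < 2 ^ n" for x z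
      using pauli_op_mult_swap[OF assms that, of Q] comm by (simp add: ops_commute_def)
    then have "(pauli_op n P * pauli_op n Q * (pauli_op n Q * pauli_op n P)) $$ (0, 0) = 0"
      by (subst index_mult_mat_sum) (auto intro: mult_carrier_mat pauli_op_carrier)
    then show False
      using pauli_op_mult_reverse_00 by simp
  qed
qed

definition wf_sparse :: "sparse \<Rightarrow> bool" where
  "wf_sparse P \<longleftrightarrow> distinct (map fst P) \<and> PI \<notin> snd ` set P"

lemma valid_sparse_imp_wf_sparse: "valid_sparse n P \<Longrightarrow> wf_sparse P"
  unfolding valid_sparse_def wf_sparse_def by fastforce

lemma subseqs_map: "subseqs (map f xs) = map (map f) (subseqs xs)"
  by (induction xs) (simp_all add: Let_def)

lemma set_subseq: "A \<in> set (subseqs P) \<Longrightarrow> set A \<subseteq> set P"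
  using subseqs_powset[of P] by blast

lemma distinct_fst_subseq:
  assumes "distinct (map fst P)" "A \<in> set (subseqs P)"
  shows "distinct (map fst A)"
proof -
  have "map fst A \<in> set (subseqs (map fst P))"
    unfolding subseqs_map set_map by (rule imageI[OF assms(2)])
  then show ?thesis
    using assms(1) by (rule subseqs_distinctD)
qed

lemma pfun_Cons: "pfun ((j, p) # P) = (pfun P)(j := p)"
  by (simp add: pfun_def fun_eq_iff)

lemma pfun_eq_if_in_set: "distinct (map fst P) \<Longrightarrow> (j, p) \<in> set P \<Longrightarrow> pfun P j = p"
  unfolding pfun_def by (subst map_of_is_SomeI) simp_all

definition restrict_pfun :: "sparse \<Rightarrow> nat set \<Rightarrow> nat \<Rightarrow> pauli" where
  "restrict_pfun P S j = (if j \<in> S then pfun P j else PI)"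

lemma pfun_subseq:
  assumes "distinct (map fst P)" "A \<in> set (subseqs P)"
  shows "pfun A = restrict_pfun P (fst ` set A)"
proof
  fix j
  show "pfun A j = restrict_pfun P (fst ` set A) j"
  proof (cases "j \<in> fst ` set A")
    case True
    then obtain p where jp: "(j, p) \<in> set A"
      by force
    have "distinct (map fst A)"
      using assms by (rule distinct_fst_subseq)
    then have "pfun A j = p"
      using jp by (rule pfun_eq_if_in_set)
    moreover have "pfun P j = p"
      using assms(1) set_subseq[OF assms(2)] jp by (auto intro: pfun_eq_if_in_set)
    ultimately show ?thesis
      unfolding restrict_pfun_def if_P[OF True] by simp
  next
    case False
    then show ?thesis
      unfolding restrict_pfun_def if_not_P[OF False] by (rule pfun_eq_PI_if_notin)
  qed
qed

lemma support_pfun: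
  assumes "wf_sparse P"
  shows "{j. pfun P j \<noteq> PI} = fst ` set P"
proof (intro equalityI subsetI)
  fix j
  show "j \<in> {j. pfun P j \<noteq> PI} \<Longrightarrow> j \<in> fst ` set P"
    using pfun_eq_PI_if_notin[of j P] by (metis mem_Collect_eq)
  assume "j \<in> fst ` set P"
  then obtain p where "(j, p) \<in> set P"
    by force
  moreover have "p \<noteq> PI"
    using assms calculation unfolding wf_sparse_def by force
  ultimately show "j \<in> {j. pfun P j \<noteq> PI}"
    using assms pfun_eq_if_in_set[of P j p] unfolding wf_sparse_def by simp
qed

lemma weight_eq_length:
  assumes "wf_sparse P"
  shows "weight P = length P"
proof -
  have "weight P = card (set (map fst P))"
    unfolding weight_def support_pfun[OF assms] by simp
  also have "\<dots> = length P"
    using assms distinct_card unfolding wf_sparse_def by fastforce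
  finally show ?thesis .
qed

section \<open>The dictionary invariant\<close>

definition is_pattern_of :: "key \<Rightarrow> sparse \<Rightarrow> bool" where
  "is_pattern_of k Q \<longleftrightarrow> fst k \<subseteq> {j. pfun Q j \<noteq> PI} \<and> snd k = restrict_pfun Q (fst k)"

definition pattern_count :: "sparse list \<Rightarrow> dict" where
  "pattern_count L k = (\<Sum>Q\<leftarrow>L. of_bool (is_pattern_of k Q))"

lemma length_filter_set_subseqs:
  assumes "distinct xs"
  shows "length (filter (\<lambda>B. set B = S) (subseqs xs)) = of_bool (S \<subseteq> set xs)"
  using assms
proof (induction xs arbitrary: S)
  case (Cons x xs)
  have x: "x \<notin> set B" if "B \<in> set (subseqs xs)" for B
    using Cons.prems set_subseq[OF that] by auto
  have "length (filter (\<lambda>B. set B = S) (map ((#) x) (subseqs xs)))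
      = of_bool (x \<in> S) * length (filter (\<lambda>B. set B = S - {x}) (subseqs xs))"
  proof (cases "x \<in> S")
    case True
    have "insert x (set B) = S \<longleftrightarrow> set B = S - {x}" if "B \<in> set (subseqs xs)" for B
      using True x[OF that] by blast
    then show ?thesis
      using True by (simp add: filter_map comp_def cong: filter_cong)
  next
    case False
    then show ?thesis
      by (auto simp: filter_map comp_def filter_empty_conv)
  qed
  moreover have "x \<in> S \<Longrightarrow> \<not> S \<subseteq> set xs"
    using Cons.prems by auto
  ultimately show ?case
    using Cons by (cases "x \<in> S") (auto simp: Let_def subset_insert_iff)
qed simp

lemma length_filter_key_of_subseqs:
  assumes "wf_sparse P"
  shows "length (filter (\<lambda>A. key_of A = k) (subseqs P)) = of_bool (is_pattern_of k P)"
proof -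
  obtain S f where k: "k = (S, f)"
    by fastforce
  have d: "distinct (map fst P)"
    using assms by (simp add: wf_sparse_def)
  have "key_of A = k \<longleftrightarrow> set (map fst A) = S \<and> f = restrict_pfun P S"
    if "A \<in> set (subseqs P)" for A
    using pfun_subseq[OF d that] k by (auto simp: key_of_def)
  then have "length (filter (\<lambda>A. key_of A = k) (subseqs P))
           = of_bool (f = restrict_pfun P S) * length (filter (\<lambda>B. set B = S) (subseqs (map fst P)))"
    by (simp add: subseqs_map filter_map comp_def cong: filter_cong)
  also have "\<dots> = of_bool (f = restrict_pfun P S \<and> S \<subseteq> fst ` set P)"
    using length_filter_set_subseqs[OF d] by simp
  also have "\<dots> = of_bool (is_pattern_of k P)"
    using support_pfun[OF assms] k by (auto simp: is_pattern_of_def)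
  finally show ?thesis .
qed

lemma dict_upd_apply:
  "dict_upd D P k = D k + int (length (filter (\<lambda>A. key_of A = k) (subseqs P)))"
proof -
  have "foldl (\<lambda>D' A. D'(key_of A := D' (key_of A) + 1)) D As k
      = D k + int (length (filter (\<lambda>A. key_of A = k) As))" for D As
    by (induction As arbitrary: D) auto
  then show ?thesis
    unfolding dict_upd_def .
qed

lemma dict_upd_pattern_count:
  assumes "wf_sparse P"
  shows "dict_upd (pattern_count L) P = pattern_count (L @ [P])"
  by (rule ext) (simp add: dict_upd_apply length_filter_key_of_subseqs[OF assms] pattern_count_def)

lemma zval_sum_list: "zval (\<lambda>k. \<Sum>Q\<leftarrow>L. f Q k) P = (\<Sum>Q\<leftarrow>L. zval (f Q) P)"
  by (induction L) (simp_all add: zval_def sum_list_addf distrib_left)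

lemma sum_list_labs_Cons:
  "(\<Sum>a\<leftarrow>labs ((j, p) # A). g a) = (\<Sum>q\<leftarrow>filter (\<lambda>q. q \<noteq> p) [PX, PY, PZ]. \<Sum>a\<leftarrow>labs A. g ((j, q) # a))"
  by (cases p) (simp_all add: comp_def)

lemma labs_fst: "a \<in> set (labs A) \<Longrightarrow> map fst a = map fst A"
  by (induction A arbitrary: a rule: labs.induct) auto

lemma labs_not_PI: "a \<in> set (labs A) \<Longrightarrow> PI \<notin> snd ` set a"
proof (induction A arbitrary: a rule: labs.induct)
  case (2 j p r)
  then obtain q a' where q: "q \<in> set (filter (\<lambda>q. q \<noteq> p) [PX, PY, PZ])"
    and a: "a = (j, q) # a'" "a' \<in> set (labs r)"
    by auto
  have "q \<noteq> PI"
    using q by (cases p) auto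
  then show ?case
    using "2.IH"[OF q a(2)] a(1) by auto
qed simp

lemma is_pattern_of_key_of_labs:
  assumes "distinct (map fst A)" "a \<in> set (labs A)"
  shows "is_pattern_of (key_of a) Q \<longleftrightarrow> (\<forall>j\<in>fst ` set A. pfun a j = pfun Q j)"
proof -
  have S: "fst ` set a = fst ` set A"
    using labs_fst[OF assms(2)] by (metis set_map)
  have "wf_sparse a"
    using assms labs_fst labs_not_PI unfolding wf_sparse_def by metis
  then have supp: "{j. pfun a j \<noteq> PI} = fst ` set A"
    using S support_pfun by blast
  show ?thesis
  proof
    assume "is_pattern_of (key_of a) Q"
    then show "\<forall>j\<in>fst ` set A. pfun a j = pfun Q j"
      by (simp add: is_pattern_of_def key_of_def S restrict_pfun_def)
  next
    assume agree: "\<forall>j\<in>fst ` set A. pfun a j = pfun Q j"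
    have "pfun a = restrict_pfun Q (fst ` set A)"
    proof
      fix j
      show "pfun a j = restrict_pfun Q (fst ` set A) j"
        using agree supp by (cases "j \<in> fst ` set A") (auto simp: restrict_pfun_def)
    qed
    moreover have "fst ` set A \<subseteq> {j. pfun Q j \<noteq> PI}"
    proof
      fix j
      assume j: "j \<in> fst ` set A"
      then have "pfun a j \<noteq> PI"
        using supp by blast
      then show "j \<in> {j. pfun Q j \<noteq> PI}"
        using agree j by simp
    qed
    ultimately show "is_pattern_of (key_of a) Q"
      by (simp add: is_pattern_of_def key_of_def S)
  qed
qed

lemma sum_labs_agreeing:
  assumes "distinct (map fst A)"
  shows "(\<Sum>a\<leftarrow>labs A. of_bool (\<forall>j\<in>fst ` set A. pfun a j = g j))
       = (of_bool (\<forall>(j, p)\<in>set A. g j \<noteq> PI \<and> g j \<noteq> p) :: int)"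
  using assms
proof (induction A)
  case (Cons x A)
  obtain j p where x: "x = (j, p)"
    by fastforce
  have j: "j \<notin> fst ` set A" and d: "distinct (map fst A)"
    using Cons.prems x by auto
  have agree: "(\<forall>i\<in>fst ` set ((j, p) # A). pfun ((j, q) # a) i = g i)
           \<longleftrightarrow> q = g j \<and> (\<forall>i\<in>fst ` set A. pfun a i = g i)" for q a
    using j by (auto simp: pfun_Cons)
  have count: "(\<Sum>q\<leftarrow>filter (\<lambda>q. q \<noteq> p) [PX, PY, PZ]. of_bool (q = g j))
             = (of_bool (g j \<noteq> PI \<and> g j \<noteq> p) :: int)"
    by (cases p; cases "g j") simp_all
  have "(\<Sum>a\<leftarrow>labs ((j, p) # A). of_bool (\<forall>i\<in>fst ` set ((j, p) # A). pfun a i = g i))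
      = (\<Sum>q\<leftarrow>filter (\<lambda>q. q \<noteq> p) [PX, PY, PZ].
           of_bool (q = g j) * (\<Sum>a\<leftarrow>labs A. of_bool (\<forall>i\<in>fst ` set A. pfun a i = g i)) :: int)"
    by (simp only: sum_list_labs_Cons agree of_bool_conj sum_list_const_mult)
  also have "\<dots> = of_bool (g j \<noteq> PI \<and> g j \<noteq> p)
                 * of_bool (\<forall>(i, p')\<in>set A. g i \<noteq> PI \<and> g i \<noteq> p')"
    by (simp only: sum_list_mult_const count Cons.IH[OF d])
  finally show ?case
    using x by simp
qed simp

lemma sum_subseqs_neg2_pow:
  assumes "distinct xs"
  shows "(\<Sum>B\<leftarrow>subseqs xs. (-2) ^ length B * of_bool (set B \<subseteq> C)) = ((-1) ^ card (C \<inter> set xs) :: int)"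
  using assms
proof (induction xs)
  case (Cons x xs)
  let ?S = "\<Sum>B\<leftarrow>subseqs xs. (-2) ^ length B * of_bool (set B \<subseteq> C) :: int"
  have split: "(\<Sum>B\<leftarrow>subseqs (x # xs). f B) = (\<Sum>B\<leftarrow>subseqs xs. f (x # B)) + (\<Sum>B\<leftarrow>subseqs xs. f B)"
    for f :: "'a list \<Rightarrow> int"
    by (simp add: Let_def comp_def)
  have "(-2) ^ length (x # B) * of_bool (set (x # B) \<subseteq> C)
      = of_bool (x \<in> C) * (-2 * ((-2) ^ length B * of_bool (set B \<subseteq> C)) :: int)" for B
    by (cases "x \<in> C") simp_all
  then have "(\<Sum>B\<leftarrow>subseqs xs. (-2) ^ length (x # B) * of_bool (set (x # B) \<subseteq> C))
      = of_bool (x \<in> C) * (-2 * ?S)"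
    by (simp only: sum_list_const_mult)
  then have "(\<Sum>B\<leftarrow>subseqs (x # xs). (-2) ^ length B * of_bool (set B \<subseteq> C)) = of_bool (x \<in> C) * (-2 * ?S) + ?S"
    by (simp only: split)
  also have "\<dots> = (-1) ^ card (C \<inter> set (x # xs))"
    using Cons by (cases "x \<in> C") (simp_all add: Int_insert_right)
  finally show ?case .
qed simp

lemma zval_pattern_indicator:
  assumes "wf_sparse P"
  shows "zval (\<lambda>k. of_bool (is_pattern_of k Q)) P = (-1) ^ card (conf Q P)"
proof -
  have d: "distinct (map fst P)"
    using assms by (simp add: wf_sparse_def)
  have labs_sum: "(\<Sum>a\<leftarrow>labs A. (-2) ^ length A * of_bool (is_pattern_of (key_of a) Q))
      = ((-2) ^ length A * of_bool (fst ` set A \<subseteq> conf Q P) :: int)"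
    if A: "A \<in> set (subseqs P)" for A
  proof -
    have dA: "distinct (map fst A)"
      using d A by (rule distinct_fst_subseq)
    have "(\<forall>(j, p)\<in>set A. pfun Q j \<noteq> PI \<and> pfun Q j \<noteq> p) \<longleftrightarrow> fst ` set A \<subseteq> conf Q P"
      using assms set_subseq[OF A] pfun_eq_if_in_set[OF d]
      by (force simp: conf_def wf_sparse_def)
    then show ?thesis
      using is_pattern_of_key_of_labs[OF dA] sum_labs_agreeing[OF dA, of "pfun Q"]
      by (simp add: sum_list_const_mult cong: map_cong)
  qed
  have "zval (\<lambda>k. of_bool (is_pattern_of k Q)) P
      = (\<Sum>A\<leftarrow>subseqs P. (-2) ^ length A * of_bool (fst ` set A \<subseteq> conf Q P))"
    unfolding zval_def using labs_sum by (simp cong: map_cong)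
  also have "\<dots> = (\<Sum>B\<leftarrow>subseqs (map fst P). (-2) ^ length B * of_bool (set B \<subseteq> conf Q P))"
    by (simp add: subseqs_map comp_def)
  also have "\<dots> = (-1) ^ card (conf Q P \<inter> set (map fst P))"
    using d by (rule sum_subseqs_neg2_pow)
  also have "conf Q P \<inter> set (map fst P) = conf Q P"
    using conf_subset_fst by auto
  finally show ?thesis .
qed

lemma length_minus_zval_pattern_count:
  assumes "wf_sparse P"
  shows "int (length L) - zval (pattern_count L) P
       = 2 * int (length (filter (\<lambda>Q. odd (card (conf Q P))) L))"
proof -
  have "zval (pattern_count L) P = (\<Sum>Q\<leftarrow>L. (-1) ^ card (conf Q P))"
    unfolding pattern_count_def[abs_def] zval_sum_list zval_pattern_indicator[OF assms] ..
  moreover have "int (length L) - (\<Sum>Q\<leftarrow>L. (-1) ^ card (conf Q P))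
               = 2 * int (length (filter (\<lambda>Q. odd (card (conf Q P))) L))"
    by (induction L) auto
  ultimately show ?thesis
    by simp
qed

lemma scan_finds_odd:
  assumes "\<exists>Q\<in>set L. odd (card (conf Q P))"
  shows "\<exists>j. fst (scan L P j0) = Some j \<and> j0 \<le> j \<and> j < j0 + length L
             \<and> odd (card (conf (L ! (j - j0)) P))"
  using assms
proof (induction L arbitrary: j0)
  case (Cons Q L)
  show ?case
  proof (cases "odd (card (conf Q P))")
    case False
    then have "\<exists>Q\<in>set L. odd (card (conf Q P))"
      using Cons.prems by auto
    then obtain j where j: "fst (scan L P (Suc j0)) = Some j" "Suc j0 \<le> j" "j < Suc j0 + length L"
      "odd (card (conf (L ! (j - Suc j0)) P))"
      using Cons.IH by blast
    then have "(Q # L) ! (j - j0) = L ! (j - Suc j0)"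
      by (simp add: Suc_diff_Suc)
    with False j show ?thesis
      by (auto split: prod.split)
  qed simp
qed simp

section \<open>Cost bounds\<close>

lemma scan_cost_le:
  assumes "\<forall>Q\<in>set L. length Q \<le> k" "length P \<le> k"
  shows "snd (scan L P j) \<le> length L * (2 * k + 1) + 1"
  using assms(1)
proof (induction L arbitrary: j)
  case (Cons Q L)
  obtain r c where rc: "scan L P (Suc j) = (r, c)"
    by fastforce
  have "c \<le> length L * (2 * k + 1) + 1"
    using Cons rc by (metis list.set_intros(2) snd_conv)
  moreover have "length Q \<le> k"
    using Cons.prems by simp
  ultimately show ?case
    using rc assms(2) by (auto simp: algebra_simps)
qed simp

lemma length_subseqs_le: "A \<in> set (subseqs P) \<Longrightarrow> length A \<le> length P"
  by (induction P arbitrary: A) (auto simp: Let_def le_SucI)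

lemma sum_list_subseqs_pow2: "(\<Sum>A\<leftarrow>subseqs P. 2 ^ length A) = (3::nat) ^ length P"
  by (induction P) (simp_all add: Let_def comp_def sum_list_const_mult)

lemma length_labs: "PI \<notin> snd ` set A \<Longrightarrow> length (labs A) = 2 ^ length A"
proof (induction A)
  case (Cons x A)
  obtain j p where x: "x = (j, p)"
    by fastforce
  then have "p \<noteq> PI" "PI \<notin> snd ` set A"
    using Cons.prems by force+
  then show ?case
    using Cons.IH x by (cases p) (simp_all add: length_concat sum_list_triv comp_def)
qed simp

lemma query_cost_le:
  assumes "PI \<notin> snd ` set P" "length P \<le> k"
  shows "query_cost P \<le> (k + 1) * 3 ^ k + 1"
proof -
  have "(\<Sum>a\<leftarrow>labs A. length a + 1) \<le> (k + 1) * 2 ^ length A" if A: "A \<in> set (subseqs P)" for A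
  proof -
    have "PI \<notin> snd ` set A"
      using assms(1) set_subseq[OF A] by blast
    moreover have "length a = length A" if "a \<in> set (labs A)" for a
      using labs_fst[OF that] by (metis length_map)
    ultimately have "(\<Sum>a\<leftarrow>labs A. length a + 1) = 2 ^ length A * (length A + 1)"
      by (simp add: length_labs sum_list_triv cong: map_cong)
    also have "\<dots> \<le> (k + 1) * 2 ^ length A"
      using length_subseqs_le[OF A] assms(2) by simp
    finally show ?thesis .
  qed
  then have "(\<Sum>A\<leftarrow>subseqs P. \<Sum>a\<leftarrow>labs A. length a + 1) \<le> (\<Sum>A\<leftarrow>subseqs P. (k + 1) * 2 ^ length A)"
    by (rule sum_list_mono)
  also have "\<dots> = (k + 1) * 3 ^ length P"
    by (simp only: sum_list_const_mult sum_list_subseqs_pow2)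
  also have "\<dots> \<le> (k + 1) * 3 ^ k"
    using assms(2) by (intro mult_le_mono2 power_increasing) simp_all
  finally show ?thesis
    unfolding query_cost_def by simp
qed

lemma upd_cost_le:
  assumes "length P \<le> k"
  shows "upd_cost P \<le> (k + 1) * 3 ^ k + 1"
proof -
  have "(\<Sum>A\<leftarrow>subseqs P. length A + 1) \<le> (\<Sum>A\<leftarrow>subseqs P. k + 1)"
    using length_subseqs_le assms by (intro sum_list_mono) fastforce
  also have "\<dots> = (k + 1) * 2 ^ length P"
    by (simp add: sum_list_triv length_subseqs)
  also have "\<dots> \<le> (k + 1) * 3 ^ k"
  proof (intro mult_le_mono2)
    have "(2::nat) ^ length P \<le> 3 ^ length P"
      by (simp add: power_mono)
    also have "\<dots> \<le> 3 ^ k"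
      using assms by (simp add: power_increasing)
    finally show "(2::nat) ^ length P \<le> 3 ^ k" .
  qed
  finally show ?thesis
    unfolding upd_cost_def by simp
qed

lemma query_upd_cost_le:
  assumes "wf_sparse P" "length P \<le> k" "1 \<le> k"
  shows "query_cost P + upd_cost P \<le> 6 * k * 3 ^ k"
proof -
  define T where "T = k * 3 ^ k"
  have "(k + 1) * 3 ^ k \<le> 2 * T"
    using assms(3) unfolding T_def by (simp add: mult.assoc[symmetric])
  moreover have "1 \<le> T"
    using assms(3) unfolding T_def by (simp add: Suc_le_eq)
  moreover have "query_cost P \<le> (k + 1) * 3 ^ k + 1" "upd_cost P \<le> (k + 1) * 3 ^ k + 1"
    using assms query_cost_le[of P k] upd_cost_le[of P k] by (auto simp: wf_sparse_def)
  ultimately show ?thesis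
    unfolding T_def by linarith
qed

section \<open>The certification loop\<close>

definition correct_result :: "sparse list \<Rightarrow> result \<Rightarrow> bool" where
  "correct_result Ps r \<longleftrightarrow>
     (r = AllCommute \<and> (\<forall>Q\<in>set Ps. \<forall>Q'\<in>set Ps. even (card (conf Q Q'))))
   \<or> (\<exists>j i. r = Witness j i \<and> j < i \<and> i < length Ps \<and> odd (card (conf (Ps ! j) (Ps ! i))))"

lemma pattern_count_Nil: "pattern_count [] = (\<lambda>_. 0)"
  by (simp add: pattern_count_def fun_eq_iff)

lemma cert_loop_correct:
  assumes "\<forall>P\<in>set rest. wf_sparse P"
    and "\<forall>Q\<in>set dn. \<forall>Q'\<in>set dn. even (card (conf Q Q'))"
  shows "correct_result (dn @ rest) (fst (cert_loop dn rest (pattern_count dn) (int (length dn))))"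
  using assms
proof (induction rest arbitrary: dn)
  case Nil
  then show ?case
    by (simp add: correct_result_def)
next
  case (Cons P rest)
  have P: "wf_sparse P"
    using Cons.prems(1) by simp
  define c where "c = (int (length dn) - zval (pattern_count dn) P) div 2"
  have c: "c = int (length (filter (\<lambda>Q. odd (card (conf Q P))) dn))"
    unfolding c_def length_minus_zval_pattern_count[OF P] by simp
  show ?case
  proof (cases "c > 0")
    case True
    then have "\<exists>Q\<in>set dn. odd (card (conf Q P))"
      unfolding c by (auto simp: filter_empty_conv)
    then obtain j where j: "fst (scan dn P 0) = Some j" "j < length dn" "odd (card (conf (dn ! j) P))"
      using scan_finds_odd[of dn P 0] by auto
    moreover obtain cs where "scan dn P 0 = (Some j, cs)"
      using j(1) by (metis prod.collapse)
    ultimately have "fst (cert_loop dn (P # rest) (pattern_count dn) (int (length dn)))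
        = Witness j (length dn)"
      using True by (simp add: c_def[symmetric] Let_def)
    then show ?thesis
      using j by (auto simp: correct_result_def nth_append)
  next
    case False
    then have "\<forall>Q\<in>set dn. even (card (conf Q P))"
      unfolding c by (simp add: filter_empty_conv)
    then have "\<forall>Q\<in>set (dn @ [P]). \<forall>Q'\<in>set (dn @ [P]). even (card (conf Q Q'))"
      using Cons.prems(2) conf_commute conf_self by auto
    then have "correct_result ((dn @ [P]) @ rest)
        (fst (cert_loop (dn @ [P]) rest (pattern_count (dn @ [P])) (int (length (dn @ [P])))))"
      using Cons.prems(1) by (intro Cons.IH) auto
    moreover have "fst (cert_loop dn (P # rest) (pattern_count dn) (int (length dn)))
        = fst (cert_loop (dn @ [P]) rest (pattern_count (dn @ [P])) (int (length (dn @ [P]))))"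
      using False by (simp add: c_def[symmetric] Let_def dict_upd_pattern_count[OF P] add.commute
                           split: prod.split)
    ultimately show ?thesis
      by simp
  qed
qed

lemma cert_loop_cost_le:
  assumes "\<forall>Q\<in>set dn \<union> set rest. length Q \<le> k"
    and "\<forall>P\<in>set rest. query_cost P + upd_cost P \<le> B"
  shows "snd (cert_loop dn rest D N) \<le> length rest * B + (length dn + length rest) * (2 * k + 1) + 1"
  using assms
proof (induction rest arbitrary: dn D N)
  case (Cons P rest)
  have B: "query_cost P + upd_cost P \<le> B"
    using Cons.prems(2) by simp
  show ?case
  proof (cases "(N - zval D P) div 2 > 0")
    case True
    obtain r cs where rc: "scan dn P 0 = (r, cs)"
      by fastforce
    have "cs \<le> length dn * (2 * k + 1) + 1"
      using Cons.prems(1) scan_cost_le[of dn k P 0] rc by auto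
    moreover have "snd (cert_loop dn (P # rest) D N) = query_cost P + cs"
      using True rc by (simp add: Let_def)
    ultimately show ?thesis
      using B by (simp add: algebra_simps)
  next
    case False
    obtain res cst where rc: "cert_loop (dn @ [P]) rest (dict_upd D P) (N + 1) = (res, cst)"
      by fastforce
    have "cst \<le> length rest * B + (length (dn @ [P]) + length rest) * (2 * k + 1) + 1"
      using Cons.prems Cons.IH[of "dn @ [P]" "dict_upd D P" "N + 1"] rc by auto
    moreover have "snd (cert_loop dn (P # rest) D N) = query_cost P + upd_cost P + cst"
      using False rc by (simp add: Let_def)
    ultimately show ?thesis
      using B by (simp add: algebra_simps)
  qed
qed simp

theorem certify_correct:
  assumes "\<forall>P\<in>set Ps. valid_sparse n P"
  shows "(fst (certify Ps) = AllCommute \<and>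
           (\<forall>i<length Ps. \<forall>j<length Ps. ops_commute n (Ps ! i) (Ps ! j)))
       \<or> (\<exists>j i. fst (certify Ps) = Witness j i \<and> j < i \<and> i < length Ps \<and>
              \<not> ops_commute n (Ps ! j) (Ps ! i))"
proof -
  have "\<forall>P\<in>set Ps. wf_sparse P"
    using assms valid_sparse_imp_wf_sparse by blast
  then have "correct_result Ps (fst (certify Ps))"
    using cert_loop_correct[of Ps "[]"] by (simp add: certify_def pattern_count_Nil)
  then consider
      (all) "fst (certify Ps) = AllCommute" "\<forall>Q\<in>set Ps. \<forall>Q'\<in>set Ps. even (card (conf Q Q'))"
    | (witness) j i where "fst (certify Ps) = Witness j i" "j < i" "i < length Ps"
        "odd (card (conf (Ps ! j) (Ps ! i)))"
    unfolding correct_result_def by blast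
  then show ?thesis
  proof cases
    case all
    then show ?thesis
      using assms by (simp add: ops_commute_iff_even_conf)
  next
    case witness
    then show ?thesis
      using assms by (auto simp: ops_commute_iff_even_conf)
  qed
qed

theorem certify_cost_le:
  assumes "1 \<le> k" "\<forall>P\<in>set Ps. wf_sparse P \<and> length P \<le> k"
  shows "snd (certify Ps) \<le> 9 * length Ps * k * 3 ^ k + 9"
proof -
  define T where "T = k * 3 ^ k"
  have "k \<le> T" "1 \<le> T"
    using assms(1) unfolding T_def by (simp_all add: Suc_le_eq)
  then have "2 * k + 1 \<le> 3 * T"
    by linarith
  have "snd (certify Ps) \<le> length Ps * (6 * T) + length Ps * (2 * k + 1) + 1"
    using cert_loop_cost_le[of "[]" Ps k "6 * T"] assms query_upd_cost_le
    unfolding certify_def T_def by (simp add: mult.assoc)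
  also have "\<dots> \<le> length Ps * (6 * T) + length Ps * (3 * T) + 1"
    using \<open>2 * k + 1 \<le> 3 * T\<close> by (intro add_le_mono le_refl mult_le_mono2)
  also have "\<dots> = 9 * length Ps * k * 3 ^ k + 1"
    unfolding T_def by (simp add: algebra_simps)
  finally show ?thesis
    by simp
qed

theorem corollary2:
  "\<exists>C::nat. \<forall>(n::nat) (k::nat) (Ps::sparse list).
     k \<ge> 1 \<longrightarrow> (\<forall>P\<in>set Ps. valid_sparse n P \<and> weight P \<le> k) \<longrightarrow>
     ((fst (certify Ps) = AllCommute \<and>
        (\<forall>i<length Ps. \<forall>j<length Ps. ops_commute n (Ps ! i) (Ps ! j)))
      \<or> (\<exists>j i. fst (certify Ps) = Witness j i \<and> j < i \<and> i < length Ps \<and>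
              \<not> ops_commute n (Ps ! j) (Ps ! i)))
     \<and> snd (certify Ps) \<le> C * length Ps * k * 3 ^ k + C"
proof (intro exI[of _ 9] allI impI conjI certify_correct certify_cost_le)
  fix n k :: nat and Ps :: "sparse list"
  assume k: "k \<ge> 1" and Ps: "\<forall>P\<in>set Ps. valid_sparse n P \<and> weight P \<le> k"
  then show "\<forall>P\<in>set Ps. valid_sparse n P" "1 \<le> k"
    by blast+
  show "\<forall>P\<in>set Ps. wf_sparse P \<and> length P \<le> k"
    using Ps valid_sparse_imp_wf_sparse weight_eq_length by metis
qed

end
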